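(* Let $(M,g)$ be a semi-Riemannian manifold with Levi-Civita connection $\overset{\circ}{\nabla}$, and let $\nabla$ be an affine connection of the form $\nabla_XY=\overset{\circ}{\nabla}_XY+U(-,X,Y)$, where $U$ is a $(1,2)$-tensor field. Define $S(A,X,Y):=U(A^\flat,X,Y)$ for vector fields $A,X,Y$. Then the following are equivalent: (i) $(U,\nabla)$ is a Schrödinger connection; (ii) for all vector fields $A,X,Y$, $S(A,X,Y)=S(A,Y,X)$ and $S(A,X,Y)+S(Y,A,X)+S(X,Y,A)=0$.
   Context: Musical isomorphisms: $X^\flat=g(X,-)$, $\omega^\sharp=g^{-1}(\omega,-)$. For a $(1,2)$-tensor field $U$, $U(-,X,Y)$ denotes the vector field with $\omega(U(-,X,Y))=U(\omega,X,Y)$. The pair $(U,\nabla)$ with $\nabla_XY=\overset{\circ}{\nabla}_XY+U(-,X,Y)$ is called a Schrödinger connection if for all vector fields $X,Y$ and one-forms $\omega$: (a) $U(\omega,X,Y)=U(\omega,Y,X)$, and (b) $U(\omega,X,Y)+U(\omega,Y,X)+U(X^\flat,\omega^\sharp,Y)+U(X^\flat,Y,\omega^\sharp)+U(Y^\flat,\omega^\sharp,X)+U(Y^\flat,X,\omega^\sharp)=0$. *)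

theory Defs
  imports "HOL-Analysis.Analysis"
begin

text \<open>At a point, the tangent space is a
finite-dimensional real vector space 'v; one-forms are linear functionals
'v \<Rightarrow> real; the metric is a nondegenerate symmetric bilinear form.\<close>

definition semi_riemannian_form :: "('v::euclidean_space \<Rightarrow> 'v \<Rightarrow> real) \<Rightarrow> bool" where
  "semi_riemannian_form g \<longleftrightarrow>
     (\<forall>x. linear (g x)) \<and> (\<forall>x y. g x y = g y x) \<and>
     (\<forall>x. (\<forall>y. g x y = 0) \<longrightarrow> x = 0)"

definition flat :: "('v \<Rightarrow> 'v \<Rightarrow> real) \<Rightarrow> 'v \<Rightarrow> ('v \<Rightarrow> real)" where
  "flat g X = (\<lambda>Z. g X Z)"

definition sharp :: "('v \<Rightarrow> 'v \<Rightarrow> real) \<Rightarrow> ('v \<Rightarrow> real) \<Rightarrow> 'v" where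
  "sharp g \<omega> = (THE v. \<forall>Z. g v Z = \<omega> Z)"

definition tensor12 :: "(('v::euclidean_space \<Rightarrow> real) \<Rightarrow> 'v \<Rightarrow> 'v \<Rightarrow> real) \<Rightarrow> bool" where
  "tensor12 U \<longleftrightarrow>
     (\<forall>\<omega> Y. linear \<omega> \<longrightarrow> linear (\<lambda>X. U \<omega> X Y)) \<and>
     (\<forall>\<omega> X. linear \<omega> \<longrightarrow> linear (\<lambda>Y. U \<omega> X Y)) \<and>
     (\<forall>\<omega>1 \<omega>2 a X Y. linear \<omega>1 \<longrightarrow> linear \<omega>2 \<longrightarrow>
        U (\<lambda>z. a * \<omega>1 z + \<omega>2 z) X Y = a * U \<omega>1 X Y + U \<omega>2 X Y)"

definition schroedinger_pt ::
  "('v::euclidean_space \<Rightarrow> 'v \<Rightarrow> real) \<Rightarrow> (('v \<Rightarrow> real) \<Rightarrow> 'v \<Rightarrow> 'v \<Rightarrow> real) \<Rightarrow> bool" where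
  "schroedinger_pt g U \<longleftrightarrow>
     (\<forall>\<omega> X Y. linear \<omega> \<longrightarrow> U \<omega> X Y = U \<omega> Y X) \<and>
     (\<forall>\<omega> X Y. linear \<omega> \<longrightarrow>
        U \<omega> X Y + U \<omega> Y X + U (flat g X) (sharp g \<omega>) Y + U (flat g X) Y (sharp g \<omega>)
        + U (flat g Y) (sharp g \<omega>) X + U (flat g Y) X (sharp g \<omega>) = 0)"

definition schroedinger_connection ::
  "'m set \<Rightarrow> ('m \<Rightarrow> 'v::euclidean_space \<Rightarrow> 'v \<Rightarrow> real) \<Rightarrow> ('m \<Rightarrow> ('v \<Rightarrow> real) \<Rightarrow> 'v \<Rightarrow> 'v \<Rightarrow> real) \<Rightarrow> bool" where
  "schroedinger_connection M g U \<longleftrightarrow> (\<forall>p\<in>M. schroedinger_pt (g p) (U p))"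

definition S_tensor :: "('v \<Rightarrow> 'v \<Rightarrow> real) \<Rightarrow> (('v \<Rightarrow> real) \<Rightarrow> 'v \<Rightarrow> 'v \<Rightarrow> real) \<Rightarrow> 'v \<Rightarrow> 'v \<Rightarrow> 'v \<Rightarrow> real" where
  "S_tensor g U A X Y = U (flat g A) X Y"

end

theory Submission
  imports Defs
begin

text \<open>A nondegenerate metric makes \<open>flat\<close> a bijection from vectors onto linear
  one-forms, with inverse \<open>sharp\<close>. So quantifying over one-forms \<open>\<omega>\<close> is the same as
  quantifying over vectors \<open>A\<close> with \<open>\<omega> = A\<^sup>\<flat>\<close>, and then \<open>\<omega>\<^sup>\<sharp> = A\<close> turns the
  Schroedinger condition (b) into the vanishing of the sum of \<open>S\<close> over all six
  orderings of \<open>A, X, Y\<close>. Under the symmetry (a) this sum is twice the cyclic sum.\<close>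

lemma semi_riemannian_formD:
  assumes "semi_riemannian_form g"
  shows "linear (g x)" and "g x y = g y x" and "(\<And>y. g x y = 0) \<Longrightarrow> x = 0"
  using assms unfolding semi_riemannian_form_def by auto

lemma linear_flat:
  assumes "semi_riemannian_form g"
  shows "linear (flat g A)"
  using semi_riemannian_formD(1)[OF assms] by (simp add: flat_def)

lemma sharp_flat:
  assumes g: "semi_riemannian_form g"
  shows "sharp g (flat g A) = A"
  unfolding sharp_def flat_def
proof (rule the_equality)
  fix v assume v: "\<forall>Z. g v Z = g A Z"
  have "g (v - A) Z = 0" for Z
  proof -
    have "g (v - A) Z = g Z v - g Z A"
      using semi_riemannian_formD(2)[OF g] linear_diff[OF semi_riemannian_formD(1)[OF g]] by metis
    then show ?thesis
      using v semi_riemannian_formD(2)[OF g] by simp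
  qed
  then show "v = A"
    using semi_riemannian_formD(3)[OF g] by fastforce
qed simp

lemma flat_surj_linear:
  fixes g :: "'v::euclidean_space \<Rightarrow> 'v \<Rightarrow> real"
  assumes g: "semi_riemannian_form g" and \<omega>: "linear \<omega>"
  obtains A where "flat g A = \<omega>"
proof -
  note lin = semi_riemannian_formD(1)[OF g] and sym = semi_riemannian_formD(2)[OF g]
    and nondeg = semi_riemannian_formD(3)[OF g]
  \<comment> \<open>\<open>F v\<close> is the vector of components of \<open>v\<^sup>\<flat>\<close> on the basis; \<open>F\<close> is injective by
    nondegeneracy, hence surjective in finite dimension.\<close>
  define F where "F v = (\<Sum>i\<in>Basis. g v i *\<^sub>R i)" for v
  have linF: "linear F"
  proof -
    have "linear (\<lambda>v. g v i)" for i
    proof -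
      have "(\<lambda>v. g v i) = g i" using sym by (intro ext)
      then show ?thesis using lin[of i] by simp
    qed
    then have "linear (\<lambda>v. g v i *\<^sub>R i)" for i
      by (auto simp: linear_iff scaleR_add_left)
    then show ?thesis
      unfolding F_def[abs_def] by (intro linear_compose_sum) auto
  qed
  have F_eq_iff: "F v = (\<Sum>i\<in>Basis. \<omega>' i *\<^sub>R i) \<longleftrightarrow> (\<forall>i\<in>Basis. g v i = \<omega>' i)" for v \<omega>'
    unfolding F_def euclidean_eq_iff[where 'a='v] by (simp add: inner_sum_left_Basis)
  have "inj F"
  proof (rule linear_injective_0[THEN iffD2, OF linF], intro allI impI)
    fix v assume "F v = 0"
    then have "\<forall>i\<in>Basis. g v i = 0"
      using F_eq_iff[of v "\<lambda>_. 0"] by simp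
    then have "g v = (\<lambda>_. 0)"
      by (intro linear_eq_stdbasis[OF lin]) (auto simp: linear_zero)
    then show "v = 0" using nondeg by metis
  qed
  then obtain A where "F A = (\<Sum>i\<in>Basis. \<omega> i *\<^sub>R i)"
    using linear_injective_imp_surjective[OF linF] by (metis surj_def)
  then have "g A = \<omega>"
    using F_eq_iff by (intro linear_eq_stdbasis[OF lin \<omega>]) auto
  then show ?thesis
    using that by (simp add: flat_def)
qed

lemma all_linear_form_iff_all_flat:
  fixes g :: "'v::euclidean_space \<Rightarrow> 'v \<Rightarrow> real"
  assumes "semi_riemannian_form g"
  shows "(\<forall>\<omega>. linear \<omega> \<longrightarrow> P \<omega>) \<longleftrightarrow> (\<forall>A. P (flat g A))"
  using flat_surj_linear[OF assms] linear_flat[OF assms] by metis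

lemma schroedinger_pt_iff_S_tensor_six_terms:
  fixes g :: "'v::euclidean_space \<Rightarrow> 'v \<Rightarrow> real"
    and U :: "('v \<Rightarrow> real) \<Rightarrow> 'v \<Rightarrow> 'v \<Rightarrow> real"
  assumes g: "semi_riemannian_form g"
  defines "S \<equiv> S_tensor g U"
  shows "schroedinger_pt g U \<longleftrightarrow>
    (\<forall>A X Y. S A X Y = S A Y X) \<and>
    (\<forall>A X Y. S A X Y + S A Y X + S X A Y + S X Y A + S Y A X + S Y X A = 0)"
proof -
  have all_one_forms: "(\<forall>\<omega> X Y. linear \<omega> \<longrightarrow> P \<omega> X Y) \<longleftrightarrow> (\<forall>A X Y. P (flat g A) X Y)" for P
    using all_linear_form_iff_all_flat[OF g, of "\<lambda>\<omega>. \<forall>X Y. P \<omega> X Y"] by blast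
  show ?thesis
    unfolding schroedinger_pt_def S_def S_tensor_def by (simp only: all_one_forms sharp_flat[OF g])
qed

lemma six_terms_eq_twice_cyclic_sum:
  fixes S :: "'a \<Rightarrow> 'a \<Rightarrow> 'a \<Rightarrow> real"
  assumes "\<And>A X Y. S A X Y = S A Y X"
  shows "S A X Y + S A Y X + S X A Y + S X Y A + S Y A X + S Y X A
    = 2 * (S A X Y + S Y A X + S X Y A)"
  using assms[of A X Y] assms[of X A Y] assms[of Y X A] by simp

theorem mainTheorem2:
  fixes M :: "'m set"
    and g :: "'m \<Rightarrow> 'v::euclidean_space \<Rightarrow> 'v \<Rightarrow> real"
    and U :: "'m \<Rightarrow> ('v \<Rightarrow> real) \<Rightarrow> 'v \<Rightarrow> 'v \<Rightarrow> real"
  assumes "\<forall>p\<in>M. semi_riemannian_form (g p)"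
    and "\<forall>p\<in>M. tensor12 (U p)"
  shows "schroedinger_connection M g U \<longleftrightarrow>
    (\<forall>p\<in>M. \<forall>A X Y.
        S_tensor (g p) (U p) A X Y = S_tensor (g p) (U p) A Y X \<and>
        S_tensor (g p) (U p) A X Y + S_tensor (g p) (U p) Y A X + S_tensor (g p) (U p) X Y A = 0)"
  \<comment> \<open>The equivalence holds pointwise for arbitrary \<open>U\<close>.\<close>
  unfolding schroedinger_connection_def
proof (intro ball_cong refl)
  fix p assume "p \<in> M"
  then have g: "semi_riemannian_form (g p)" using assms(1) by blast
  let ?S = "S_tensor (g p) (U p)"
  show "schroedinger_pt (g p) (U p) \<longleftrightarrow>
      (\<forall>A X Y. ?S A X Y = ?S A Y X \<and> ?S A X Y + ?S Y A X + ?S X Y A = 0)"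
    unfolding schroedinger_pt_iff_S_tensor_six_terms[OF g]
    using six_terms_eq_twice_cyclic_sum[of ?S] by (smt (verit))
qed

end
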